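(* Let $f\colon\mathbb{C}\to\mathbb{C}$, $f(z)=e^z$, and for $z_0\in\mathbb{C}$ define its orbit by $z_n = e^{z_{n-1}}$ for $n\geq 1$. Then each of the following sets is dense in $\mathbb{C}$: 1. the set of $z_0$ whose orbit satisfies $z_n\to\infty$ (i.e. $|z_n|\to\infty$) as $n\to\infty$; 2. the set of $z_0$ whose orbit $\{z_n : n\ge 0\}$ is a dense subset of $\mathbb{C}$; 3. the set of periodic points, i.e. those $z_0$ for which there is $k>0$ with $z_{n+k}=z_n$ for all $n\geq 0$. *)

theory Defs
  imports "HOL-Analysis.Analysis"
begin

end

theory Submission
  imports Defs "HOL-Complex_Analysis.Conformal_Mappings"
begin

(* 1. Along every orbit z_k = exp^k(z_0) the derivative (exp^n)'(z_0) = z_1 \<cdots> z_n is unbounded.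
      Writing z_k = x_k + i y_k, one has x_{k+1} = e^{x_k} cos y_k, y_{k+1} = e^{x_k} sin y_k;
      bounded derivatives would force |y_k| < 1/3 eventually (|sin y| contracts |y| when
      |y| \<ge> 1/3), after which x_k increases without bound -- a contradiction.
   2. By Bloch's theorem, a large derivative at the centre of a disc forces exp^n of the disc to
      contain a disc of radius > \<pi>, which contains a point mapped by exp onto the real axis.
      Hence every disc contains a point whose orbit reaches \<real>, and such points escape.
   3. Near real orbits exp expands, so inverse branches (continuous right inverses of exp^m) carry
      any disc {|w - v| \<le> |v|/3} back into any prescribed open set.  Brouwer's fixed point
      theorem applied to such a branch yields periodic points; topological transitivity plus the
      Baire category theorem yields points with dense orbits. *)

lemma exp_iterate_holomorphic: "(exp ^^ n) holomorphic_on (UNIV :: complex set)"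
  by (induction n) (auto intro!: holomorphic_intros holomorphic_on_compose[unfolded o_def])

lemma exp_iterate_has_derivative:
  "((exp ^^ n) has_field_derivative (\<Prod>k\<in>{1..n}. (exp ^^ k) z)) (at (z :: complex))"
proof (induction n)
  case 0
  then show ?case by (simp add: DERIV_ident[unfolded id_def])
next
  case (Suc n)
  from DERIV_chain2[OF DERIV_exp Suc] show ?case
    by (simp add: prod.cl_ivl_Suc mult.commute)
qed

(* On the real axis exp(x) \<ge> x + 1, so real orbits move to the right by at least one per step. *)
lemma real_orbit_grows:
  assumes "Im u = 0"
  shows "Im ((exp ^^ j) u) = 0 \<and> Re u + j \<le> Re ((exp ^^ j) u)"
proof (induction j)
  case (Suc j)
  let ?z = "(exp ^^ j) u"
  have "Re ?z + 1 \<le> exp (Re ?z)" using exp_ge_add_one_self[of "Re ?z"] by linarith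
  with Suc show ?case by (simp add: Re_exp Im_exp)
qed (use assms in simp)

lemma reaching_real_axis_escapes:
  assumes "Im ((exp ^^ n) w) = 0"
  shows "filterlim (\<lambda>m. norm ((exp ^^ m) w)) at_top sequentially"
  unfolding filterlim_at_top
proof
  fix Z :: real
  let ?u = "(exp ^^ n) w"
  show "eventually (\<lambda>m. Z \<le> norm ((exp ^^ m) w)) sequentially"
  proof (rule eventually_sequentiallyI[of "n + nat \<lceil>Z - Re ?u\<rceil>"])
    fix m assume m: "n + nat \<lceil>Z - Re ?u\<rceil> \<le> m"
    have "(exp ^^ m) w = (exp ^^ (m - n)) ?u"
      using m by (metis funpow_add le_add1 le_add_diff_inverse2 le_trans o_apply)
    then have "Re ?u + (m - n) \<le> Re ((exp ^^ m) w)" using real_orbit_grows[OF assms] by simp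
    moreover have "Z - Re ?u \<le> real (m - n)" using m by linarith
    ultimately show "Z \<le> norm ((exp ^^ m) w)" using complex_Re_le_cmod[of "(exp ^^ m) w"] by linarith
  qed
qed

lemma cos_ge_one_minus_square: "1 - y ^ 2 / 2 \<le> cos (y :: real)"
proof -
  have "\<bar>sin (y/2)\<bar> ^ 2 \<le> \<bar>y/2\<bar> ^ 2"
    by (rule power_mono[OF abs_sin_x_le_abs_x abs_ge_zero])
  moreover have "cos y = 1 - 2 * sin (y/2) ^ 2"
    using cos_double_sin[of "y/2"] by simp
  ultimately show ?thesis by (simp add: power_divide)
qed

lemma sin_contraction:
  obtains c :: real where "0 \<le> c" "c < 1" "\<And>y :: real. 1/3 \<le> \<bar>y\<bar> \<Longrightarrow> \<bar>sin y\<bar> \<le> c * \<bar>y\<bar>"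
proof
  let ?c = "cos (1/6 :: real)"
  show "?c < 1" using cos_double_less_one[of "1/12"] by simp
  have c_half: "1/2 \<le> ?c" using cos_ge_one_minus_square[of "1/6"] by (simp add: power2_eq_square)
  then show "0 \<le> ?c" by simp
  fix y :: real assume y: "1/3 \<le> \<bar>y\<bar>"
  show "\<bar>sin y\<bar> \<le> ?c * \<bar>y\<bar>"
  proof (cases "2 \<le> \<bar>y\<bar>")
    case True
    then have "1 \<le> ?c * \<bar>y\<bar>" using c_half mult_mono[of "1/2" ?c 2 "\<bar>y\<bar>"] by simp
    then show ?thesis using abs_sin_le_one[of y] by linarith
  next
    case False
    have cos_half: "cos (y/2) = cos (\<bar>y\<bar>/2)" using cos_abs_real[of "y/2"] by simp
    have "0 \<le> cos (\<bar>y\<bar>/2)" using False pi_gt3 by (intro cos_ge_zero) auto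
    moreover have "cos (\<bar>y\<bar>/2) \<le> ?c" using False y pi_gt3 by (subst cos_mono_le_eq) auto
    moreover have "\<bar>sin (y/2)\<bar> \<le> \<bar>y\<bar>/2" using abs_sin_x_le_abs_x[of "y/2"] by simp
    moreover have "\<bar>sin y\<bar> = 2 * \<bar>sin (y/2)\<bar> * cos (\<bar>y\<bar>/2)"
      using sin_double[of "y/2"] cos_half calculation(1) by (simp add: abs_mult)
    ultimately show ?thesis
      using mult_mono[of "2 * \<bar>sin (y/2)\<bar>" "\<bar>y\<bar>" "cos (\<bar>y\<bar>/2)" ?c] by (simp add: mult.commute)
  qed
qed

lemma exp_cos_ge_shift:
  fixes s t :: real
  assumes "\<bar>t\<bar> < 1/3"
  shows "s + 1/2 \<le> exp s * cos t"
proof -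
  have "\<bar>t\<bar> ^ 2 \<le> (1/3) ^ 2" using assms by (intro power_mono) auto
  then have "t ^ 2 \<le> 1/9" by (simp add: power_divide)
  then have cos_t: "9/10 \<le> cos t" using cos_ge_one_minus_square[of t] by linarith
  have "s + 1/2 \<le> 9/10 * exp s"
  proof (cases "s \<le> 4")
    case True
    then show ?thesis using exp_ge_add_one_self[of s] by linarith
  next
    case False
    have "13 \<le> exp (4 :: real)" using exp_lower_Taylor_quadratic[of 4] by simp
    moreover have "exp s = exp 4 * exp (s - 4)" by (simp flip: exp_add)
    moreover have "1 + (s - 4) \<le> exp (s - 4)" by (rule exp_ge_add_one_self)
    ultimately have "13 * (s - 3) \<le> exp s"
      using mult_mono[of 13 "exp 4" "s - 3" "exp (s - 4)"] False by simp
    then show ?thesis using False by (simp add: algebra_simps)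
  qed
  also have "\<dots> \<le> cos t * exp s" using cos_t by (intro mult_right_mono) auto
  finally show ?thesis by (simp add: mult.commute)
qed

lemma exp_preimage_near:
  assumes "v \<noteq> 0"
  shows "\<exists>a. exp a = v \<and> Re a = ln (norm v) \<and> \<bar>Im a - s\<bar> \<le> pi"
proof -
  define k where "k = round ((s - Im (Ln v)) / (2 * pi))"
  define a where "a = Ln v + \<i> * (2 * pi * of_int k)"
  have "\<bar>of_int k - (s - Im (Ln v)) / (2 * pi)\<bar> \<le> 1/2"
    unfolding k_def by (rule of_int_round_abs_le)
  then have "\<bar>2 * pi * (of_int k - (s - Im (Ln v)) / (2 * pi))\<bar> \<le> pi"
    by (simp add: abs_mult)
  moreover have "2 * pi * (of_int k - (s - Im (Ln v)) / (2 * pi)) = Im a - s"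
    unfolding a_def by (simp add: field_simps)
  ultimately have "\<bar>Im a - s\<bar> \<le> pi" by simp
  moreover have "exp a = v" unfolding a_def using assms by (simp add: exp_add mult.commute)
  moreover have "Re a = ln (norm v)" unfolding a_def using assms by simp
  ultimately show ?thesis by blast
qed

lemma frequently_contracting_tendsto_zero:
  fixes R :: "nat \<Rightarrow> real"
  assumes nonneg: "\<And>n. 0 \<le> R n" and decr: "\<And>n. R (Suc n) \<le> R n"
    and c: "0 \<le> c" "c < 1" and frequent: "\<And>N. \<exists>n\<ge>N. R (Suc n) \<le> c * R n"
  shows "R \<longlonglongrightarrow> 0"
proof -
  have antimono: "R n \<le> R m" if "m \<le> n" for m n
    using lift_Suc_antimono_le[of R, OF decr that] .
  have bound: "\<exists>N. \<forall>n\<ge>N. R n \<le> c ^ J * R 0" for J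
  proof (induction J)
    case 0
    show ?case using antimono by auto
  next
    case (Suc J)
    then obtain N where N: "\<And>n. N \<le> n \<Longrightarrow> R n \<le> c ^ J * R 0" by blast
    obtain m where m: "N \<le> m" "R (Suc m) \<le> c * R m" using frequent by blast
    have "R n \<le> c ^ Suc J * R 0" if "Suc m \<le> n" for n
    proof -
      have "R n \<le> c * R m" using antimono[OF that] m(2) by linarith
      also have "\<dots> \<le> c * (c ^ J * R 0)" using N[OF m(1)] c(1) by (rule mult_left_mono)
      finally show ?thesis by simp
    qed
    then show ?case by blast
  qed
  show ?thesis
  proof (rule LIMSEQ_I)
    fix r :: real assume "0 < r"
    have "(\<lambda>J. c ^ J * R 0) \<longlonglongrightarrow> 0"
      using LIMSEQ_power_zero[of c] c by (intro tendsto_mult_left_zero) auto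
    then have "eventually (\<lambda>J. c ^ J * R 0 < r) sequentially"
      using \<open>0 < r\<close> by (rule order_tendstoD(2))
    then obtain J where "c ^ J * R 0 < r" by (auto simp: eventually_sequentially)
    moreover obtain N where "\<forall>n\<ge>N. R n \<le> c ^ J * R 0" using bound by blast
    ultimately show "\<exists>N. \<forall>n\<ge>N. norm (R n - 0) < r" using nonneg by force
  qed
qed

(* Real form of an exp-orbit: if the derivative products exp(x_0 + ... + x_{n-1}) are bounded,
   then |y_n| / exp(x_0 + ... + x_{n-1}) is nonincreasing and contracts whenever |y_n| \<ge> 1/3,
   so |y_n| \<ge> 1/3 can happen only finitely often. *)
lemma imaginary_part_eventually_small:
  fixes x y :: "nat \<Rightarrow> real"
  assumes y_step: "\<And>n. y (Suc n) = exp (x n) * sin (y n)"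
    and bounded: "\<And>n. exp (\<Sum>k<n. x k) \<le> M"
  shows "\<exists>N. \<forall>n\<ge>N. \<bar>y n\<bar> < 1/3"
proof (rule ccontr)
  assume "\<not> ?thesis"
  then have often_large: "\<exists>n\<ge>N. 1/3 \<le> \<bar>y n\<bar>" for N by (auto simp: not_less)
  obtain c where c: "0 \<le> c" "c < 1" "\<And>t :: real. 1/3 \<le> \<bar>t\<bar> \<Longrightarrow> \<bar>sin t\<bar> \<le> c * \<bar>t\<bar>"
    using sin_contraction by blast
  define R where "R n = \<bar>y n\<bar> / exp (\<Sum>k<n. x k)" for n
  have R_Suc: "R (Suc n) = \<bar>sin (y n)\<bar> / exp (\<Sum>k<n. x k)" for n
    unfolding R_def y_step by (simp add: exp_add abs_mult)
  have R_decr: "R (Suc n) \<le> R n" for n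
    unfolding R_Suc unfolding R_def by (intro divide_right_mono abs_sin_x_le_abs_x) auto
  have R_contract: "R (Suc n) \<le> c * R n" if "1/3 \<le> \<bar>y n\<bar>" for n
    unfolding R_Suc unfolding R_def using c(3)[OF that] by (simp add: divide_right_mono)
  have M_pos: "0 < M" using bounded[of 0] by simp
  have R_large: "1 / (3 * M) \<le> R n" if "1/3 \<le> \<bar>y n\<bar>" for n
  proof -
    have "1 / (3 * M) \<le> (1/3) / exp (\<Sum>k<n. x k)"
      using bounded[of n] M_pos by (simp add: field_simps)
    also have "\<dots> \<le> R n" unfolding R_def using that by (intro divide_right_mono) auto
    finally show ?thesis .
  qed
  have "R \<longlonglongrightarrow> 0"
  proof (rule frequently_contracting_tendsto_zero[where c = c])
    show "0 \<le> R n" for n unfolding R_def by simp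
    show "R (Suc n) \<le> R n" for n by (rule R_decr)
    show "\<exists>n\<ge>N. R (Suc n) \<le> c * R n" for N using often_large R_contract by blast
  qed (use c in auto)
  then have "eventually (\<lambda>n. R n < 1 / (3 * M)) sequentially"
    using M_pos by (intro order_tendstoD(2)) auto
  then obtain N where "\<And>n. N \<le> n \<Longrightarrow> R n < 1 / (3 * M)"
    by (auto simp: eventually_sequentially)
  then show False using often_large R_large by (meson not_le)
qed

(* Once |y_n| < 1/3, the real parts grow linearly, so the derivative products are unbounded. *)
lemma exp_orbit_real_form_unbounded:
  fixes x y :: "nat \<Rightarrow> real"
  assumes x_step: "\<And>n. x (Suc n) = exp (x n) * cos (y n)"
    and y_step: "\<And>n. y (Suc n) = exp (x n) * sin (y n)"
  shows "\<exists>n. M < exp (\<Sum>k<n. x k)"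
proof (rule ccontr)
  assume "\<not> ?thesis"
  then have bounded: "exp (\<Sum>k<n. x k) \<le> M" for n by (simp add: not_less)
  obtain N where N: "\<And>n. N \<le> n \<Longrightarrow> \<bar>y n\<bar> < 1/3"
    using imaginary_part_eventually_small[OF y_step bounded] by blast
  have x_linear: "x N + j/2 \<le> x (N + j)" for j
  proof (induction j)
    case (Suc j)
    have "x (N + j) + 1/2 \<le> x (N + Suc j)"
      using exp_cos_ge_shift[OF N, of "N + j" "x (N + j)"] x_step by simp
    with Suc show ?case by (simp add: add_divide_distrib)
  qed simp
  obtain j0 :: nat where "2 * (1 - x N) < j0" using reals_Archimedean2 by blast
  then have x_ge_1: "1 \<le> x n" if "N + j0 \<le> n" for n
    using x_linear[of "n - N"] that by (simp add: field_simps)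
  define K where "K = N + j0"
  have sum_growth: "(\<Sum>k<K. x k) + i \<le> (\<Sum>k<K + i. x k)" for i
  proof (induction i)
    case (Suc i)
    then show ?case using x_ge_1[of "K + i"] by (simp add: K_def)
  qed simp
  have M_pos: "0 < M" using bounded[of 0] by simp
  obtain i :: nat where "ln M - (\<Sum>k<K. x k) < i" using reals_Archimedean2 by blast
  then have "ln M < (\<Sum>k<K + i. x k)" using sum_growth[of i] by linarith
  then have "M < exp (\<Sum>k<K + i. x k)" using M_pos by (metis exp_less_mono exp_ln)
  then show False using bounded[of "K + i"] by simp
qed

lemma exp_iterate_derivative_unbounded:
  "\<exists>n. M < norm (\<Prod>k\<in>{1..n}. (exp ^^ k) (c :: complex))"
proof -
  define x where "x k = Re ((exp ^^ k) c)" for k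
  define y where "y k = Im ((exp ^^ k) c)" for k
  have "norm (\<Prod>k\<in>{1..n}. (exp ^^ k) c) = exp (\<Sum>k<n. x k)" for n
    by (induction n) (simp_all add: prod.cl_ivl_Suc norm_mult x_def exp_add mult.commute)
  moreover have "\<exists>n. M < exp (\<Sum>k<n. x k)"
    by (rule exp_orbit_real_form_unbounded) (auto simp: x_def y_def Re_exp Im_exp)
  ultimately show ?thesis by simp
qed

lemma exp_real_in_wide_disc:
  assumes "pi < r"
  shows "\<exists>z\<in>ball b r. Im (exp z) = 0"
proof -
  obtain a where a: "exp a = of_real (exp (Re b))" "Re a = Re b" "\<bar>Im a - Im b\<bar> \<le> pi"
    using exp_preimage_near[of "of_real (exp (Re b))" "Im b"] by auto
  have "dist a b = \<bar>Im a - Im b\<bar>" using a(2) by (simp add: dist_norm cmod_def)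
  then show ?thesis using a assms by (intro bexI[of _ a]) (auto simp: dist_commute)
qed

(* Bloch's theorem: if |(exp^n)'(c)| > 12\<pi>/r, then exp^n(ball c r) contains a disc of radius > \<pi>,
   hence some point of ball c r is mapped onto the real axis by exp^(n+1). *)
lemma large_derivative_forces_real_value:
  assumes r: "0 < r" and large: "12 * pi / r < norm (\<Prod>k\<in>{1..n}. (exp ^^ k) c)"
  shows "\<exists>w\<in>ball c r. Im ((exp ^^ Suc n) w) = 0"
proof -
  define r' where "r' = r * norm (\<Prod>k\<in>{1..n}. (exp ^^ k) c) / 12"
  have "deriv (exp ^^ n) c = (\<Prod>k\<in>{1..n}. (exp ^^ k) c)"
    by (rule DERIV_imp_deriv[OF exp_iterate_has_derivative])
  then have r': "r' \<le> r * norm (deriv (exp ^^ n) c) / 12" unfolding r'_def by simp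
  have "(exp ^^ n) holomorphic_on ball c r"
    using exp_iterate_holomorphic by (rule holomorphic_on_subset) auto
  then obtain b where b: "ball b r' \<subseteq> (exp ^^ n) ` ball c r"
    using Bloch r r' by blast
  have "pi < r'" using large r unfolding r'_def by (simp add: field_simps)
  then obtain z where "z \<in> ball b r'" "Im (exp z) = 0" using exp_real_in_wide_disc by blast
  with b show ?thesis by auto
qed

lemma exp_orbits_reach_real_axis:
  assumes "0 < r"
  shows "\<exists>w\<in>ball c r. \<exists>n. Im ((exp ^^ n) w) = 0"
proof -
  obtain n where "12 * pi / r < norm (\<Prod>k\<in>{1..n}. (exp ^^ k) c)"
    using exp_iterate_derivative_unbounded by blast
  then show ?thesis using large_derivative_forces_real_value[OF assms] by blast
qed

definition inverse_branch :: "('a::topological_space \<Rightarrow> 'a) \<Rightarrow> 'a set \<Rightarrow> 'a set \<Rightarrow> nat \<Rightarrow> bool" where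
  "inverse_branch f A B m \<longleftrightarrow>
     (\<exists>g. continuous_on B g \<and> g ` B \<subseteq> A \<and> (\<forall>y\<in>B. (f ^^ m) (g y) = y))"

lemma inverse_branch_refl: "inverse_branch f A A 0"
  unfolding inverse_branch_def by (intro exI[of _ id]) auto

lemma inverse_branch_mono:
  assumes "inverse_branch f A B m" "A \<subseteq> A'" "B' \<subseteq> B"
  shows "inverse_branch f A' B' m"
  using assms unfolding inverse_branch_def by (meson continuous_on_subset image_mono order_trans subsetD)

lemma inverse_branch_trans:
  assumes "inverse_branch f A B m" "inverse_branch f B C k"
  shows "inverse_branch f A C (k + m)"
proof -
  obtain g1 where g1: "continuous_on B g1" "g1 ` B \<subseteq> A" "\<forall>y\<in>B. (f ^^ m) (g1 y) = y"
    using assms(1) unfolding inverse_branch_def by blast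
  obtain g2 where g2: "continuous_on C g2" "g2 ` C \<subseteq> B" "\<forall>y\<in>C. (f ^^ k) (g2 y) = y"
    using assms(2) unfolding inverse_branch_def by blast
  have "continuous_on C (g1 \<circ> g2)"
    using continuous_on_compose[OF g2(1) continuous_on_subset[OF g1(1) g2(2)]] .
  moreover have "(g1 \<circ> g2) ` C \<subseteq> A" using g1(2) g2(2) by auto
  moreover have "(f ^^ (k + m)) ((g1 \<circ> g2) y) = y" if "y \<in> C" for y
    using g1(3) g2 that by (auto simp: funpow_add)
  ultimately show ?thesis unfolding inverse_branch_def by blast
qed

lemma Ln_near_one:
  fixes z :: complex
  assumes "norm (z - 1) \<le> e / 3" "e \<le> 1"
  shows "z \<notin> \<real>\<^sub>\<le>\<^sub>0" "norm (Ln z) \<le> e"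
proof
  assume "z \<in> \<real>\<^sub>\<le>\<^sub>0"
  then obtain t where t: "z = of_real t" "t \<le> 0" by (auto elim!: nonpos_Reals_cases)
  then have "norm (z - 1) = \<bar>t - 1\<bar>" by (metis norm_of_real of_real_1 of_real_diff)
  then show False using t(2) assms by simp
next
  have "norm (Ln (1 + (z - 1))) \<le> 2 * norm (z - 1)" using assms by (intro norm_Ln_le) auto
  then have "norm (Ln z) \<le> 2 * norm (z - 1)" by simp
  then show "norm (Ln z) \<le> e" using assms norm_ge_zero[of "z - 1"] by linarith
qed

lemma exp_inverse_branch:
  fixes p q :: complex
  assumes e: "0 < e" "e \<le> 1" and q: "dist q (exp p) + d \<le> norm (exp p) * e / 3"
  shows "inverse_branch exp (cball p e) (cball q d) 1"
proof -
  let ?B = "cball (exp p) (norm (exp p) * e / 3)"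
  let ?g = "\<lambda>y. p + Ln (y / exp p)"
  have near_one: "norm (y / exp p - 1) \<le> e / 3" if "y \<in> ?B" for y
  proof -
    have "y / exp p - 1 = (y - exp p) / exp p" by (simp add: field_simps)
    then have "norm (y / exp p - 1) = norm (y - exp p) / norm (exp p)" by (simp add: norm_divide)
    also have "\<dots> \<le> e / 3" using that by (simp add: dist_norm norm_minus_commute field_simps)
    finally show ?thesis .
  qed
  have "continuous_on ?B ?g"
    using Ln_near_one(1)[OF near_one e(2)] by (intro continuous_intros) auto
  moreover have "?g ` ?B \<subseteq> cball p e"
    using Ln_near_one(2)[OF near_one e(2)] by (auto simp: dist_norm)
  moreover have "(exp ^^ 1) (?g y) = y" if "y \<in> ?B" for y
  proof -
    have "y / exp p \<noteq> 0" using Ln_near_one(1)[OF near_one[OF that] e(2)] by auto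
    then show ?thesis by (simp add: exp_add)
  qed
  ultimately have "inverse_branch exp (cball p e) ?B 1" unfolding inverse_branch_def by blast
  moreover have "cball q d \<subseteq> ?B" using q by (simp add: cball_subset_cball_iff)
  ultimately show ?thesis using inverse_branch_mono by blast
qed

lemma inverse_branch_along_orbit:
  fixes p :: complex
  assumes "0 < e" "e \<le> 1"
  shows "\<exists>h>0. h \<le> 1 \<and> inverse_branch exp (cball p e) (cball ((exp ^^ N) p) h) N"
  using assms
proof (induction N arbitrary: p e)
  case 0
  then show ?case using inverse_branch_refl by auto
next
  case (Suc N)
  define e' where "e' = min 1 (norm (exp p) * e / 3)"
  have e': "0 < e'" "e' \<le> 1" using Suc.prems unfolding e'_def by auto
  have first: "inverse_branch exp (cball p e) (cball (exp p) e') 1"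
    using Suc.prems by (intro exp_inverse_branch) (auto simp: e'_def)
  obtain h where "0 < h" "h \<le> 1" "inverse_branch exp (cball (exp p) e') (cball ((exp ^^ N) (exp p)) h) N"
    using Suc.IH[OF e'] by blast
  moreover have "(exp ^^ N) (exp p) = (exp ^^ Suc N) p" by (simp add: funpow_Suc_right del: funpow.simps)
  ultimately show ?case using inverse_branch_trans[OF first] by (metis Suc_eq_plus1)
qed

(* Along a real orbit with x \<ge> 3, each step expands by e^x / 3 \<ge> 4/3: a disc of radius h
   around x is blown up to a disc of radius 1 around a real point as far right as desired. *)
lemma inverse_branch_along_real_orbit:
  assumes "Im x = 0" "3 \<le> Re x" "0 < h" "h \<le> 1" "1 \<le> h * (4/3) ^ J" "C \<le> Re x + J"
  shows "\<exists>X m. Im X = 0 \<and> C \<le> Re X \<and> inverse_branch exp (cball x h) (cball X 1) m"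
  using assms
proof (induction J arbitrary: x h)
  case 0
  then show ?case using inverse_branch_refl by (intro exI[of _ x]) auto
next
  case (Suc J)
  define E where "E = exp (Re x)"
  have exp_x: "exp x = of_real E" unfolding E_def using Suc.prems(1) by (simp add: complex_eq_iff Re_exp Im_exp)
  have E_ge: "Re x + 1 \<le> E" unfolding E_def using exp_ge_add_one_self[of "Re x"] by linarith
  define h' where "h' = min 1 (E * h / 3)"
  have h': "0 < h'" "h' \<le> 1" using Suc.prems E_ge unfolding h'_def by auto
  have "1 \<le> h' * (4/3) ^ J"
  proof (cases "h' = 1")
    case False
    then have "4/3 * h \<le> h'" using E_ge Suc.prems(2,3) unfolding h'_def by (auto simp: min_def)
    then have "4/3 * h * (4/3) ^ J \<le> h' * (4/3) ^ J" by (intro mult_right_mono) auto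
    moreover have "h * (4/3) ^ Suc J = 4/3 * h * (4/3) ^ J" by simp
    ultimately show ?thesis using Suc.prems(5) by linarith
  qed simp
  moreover have "C \<le> Re (exp x) + J" using Suc.prems(6) E_ge exp_x by simp
  ultimately obtain X m where X: "Im X = 0" "C \<le> Re X" "inverse_branch exp (cball (exp x) h') (cball X 1) m"
    using Suc.IH[of "exp x" h'] h' E_ge Suc.prems(2) exp_x by auto
  have "inverse_branch exp (cball x h) (cball (exp x) h') 1"
    using Suc.prems(3,4) exp_x E_ge Suc.prems(2) by (intro exp_inverse_branch) (auto simp: h'_def)
  then show ?case using inverse_branch_trans X by blast
qed

(* Three steps from far right on the real axis reach any disc {|w - v| \<le> |v|/3}:
   the big disc around e^Y contains Y' = e^Y + i\<pi>/2, whose image i e^{e^Y} lies close to a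
   logarithm of v on the imaginary axis. *)
lemma inverse_branch_from_far_real_point:
  fixes v :: complex
  assumes Y: "Im Y = 0" "3 * \<bar>ln (norm v)\<bar> + 15 \<le> Re Y" and v: "v \<noteq> 0" and d: "d \<le> norm v / 3"
  shows "inverse_branch exp (cball Y 1) (cball v d) 3"
proof -
  define R where "R = exp (Re Y)"
  have R: "3 * \<bar>ln (norm v)\<bar> + 16 \<le> R" unfolding R_def using exp_ge_add_one_self[of "Re Y"] Y(2) by linarith
  have exp_Y: "exp Y = of_real R" unfolding R_def using Y(1) by (simp add: complex_eq_iff Re_exp Im_exp)
  define b where "b = Complex R (pi/2)"
  have "dist b (exp Y) = pi/2" unfolding exp_Y b_def by (simp add: dist_norm cmod_def)
  then have to_b: "inverse_branch exp (cball Y 1) (cball b 1) 1"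
    using R pi_less_4 by (intro exp_inverse_branch) (auto simp: exp_Y)
  define t where "t = exp R"
  have t: "3 * \<bar>ln (norm v)\<bar> + 17 \<le> t" unfolding t_def using exp_ge_add_one_self[of R] R by linarith
  have exp_b: "exp b = Complex 0 t" unfolding b_def t_def by (simp add: complex_eq_iff Re_exp Im_exp)
  have exp_Re_b: "exp (Re b) = t" unfolding b_def t_def by simp
  obtain a where a: "exp a = v" "Re a = ln (norm v)" "\<bar>Im a - t\<bar> \<le> pi"
    using exp_preimage_near[OF v] by blast
  have "dist a (exp b) \<le> \<bar>ln (norm v)\<bar> + pi"
    using cmod_le[of "a - exp b"] a(2,3) by (simp add: dist_norm exp_b)
  then have to_a: "inverse_branch exp (cball b 1) (cball a 1) 1"
    using t pi_less_4 by (intro exp_inverse_branch) (auto simp: exp_Re_b)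
  have to_v: "inverse_branch exp (cball a 1) (cball v d) 1"
    using d by (intro exp_inverse_branch) (auto simp: a(1))
  show ?thesis using inverse_branch_trans[OF inverse_branch_trans[OF to_b to_a] to_v] by (simp add: eval_nat_numeral)
qed

(* Pick w in the ball whose orbit becomes real, pull back along that orbit
   until it is real and \<ge> 3, then along the real orbit until the disc has radius 1 and lies
   far enough to the right, and finish with the three steps above. *)
lemma exp_inverse_branch_onto_disc:
  fixes z0 v :: complex
  assumes r: "0 < r" and v: "v \<noteq> 0" and d: "d \<le> norm v / 3"
  shows "\<exists>m>0. inverse_branch exp (ball z0 r) (cball v d) m"
proof -
  obtain w n where w: "w \<in> ball z0 r" "Im ((exp ^^ n) w) = 0"
    using exp_orbits_reach_real_axis[OF r] by blast
  define e where "e = min 1 ((r - dist z0 w) / 2)"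
  have e: "0 < e" "e \<le> 1" using w(1) unfolding e_def by auto
  have "e \<le> (r - dist z0 w) / 2" unfolding e_def by (rule min.cobounded2)
  with w(1) have "cball w e \<subseteq> ball z0 r" unfolding cball_subset_ball_iff by (simp add: dist_commute)
  moreover obtain h where h: "0 < h" "h \<le> 1"
    "inverse_branch exp (cball w e) (cball ((exp ^^ (n + 4)) w) h) (n + 4)"
    using inverse_branch_along_orbit[OF e] by blast
  ultimately have to_x: "inverse_branch exp (ball z0 r) (cball ((exp ^^ (n + 4)) w) h) (n + 4)"
    using inverse_branch_mono[OF h(3)] by blast
  define u where "u = (exp ^^ Suc n) w"
  have u: "Im u = 0" "0 < Re u" unfolding u_def using w(2) by (simp_all add: Im_exp Re_exp)
  have "(exp ^^ (n + 4)) w = (exp ^^ 3) u"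
    unfolding u_def by (simp flip: funpow_add add: numeral_eq_Suc)
  then have x: "Im ((exp ^^ (n + 4)) w) = 0" "3 \<le> Re ((exp ^^ (n + 4)) w)"
    using real_orbit_grows[OF u(1), of 3] u(2) by auto
  define C where "C = 3 * \<bar>ln (norm v)\<bar> + 15"
  obtain J0 where "1 / h < (4/3) ^ J0" using real_arch_pow[of "4/3 :: real" "1/h"] by auto
  then have "1 < (4/3) ^ J0 * h" by (simp only: pos_divide_less_eq[OF h(1)])
  also have "\<dots> \<le> (4/3) ^ (J0 + nat \<lceil>C\<rceil>) * h"
    using h(1) by (intro mult_right_mono power_increasing) auto
  finally have J1: "1 \<le> h * (4/3) ^ (J0 + nat \<lceil>C\<rceil>)" by (simp add: mult.commute)
  have J2: "C \<le> Re ((exp ^^ (n + 4)) w) + (J0 + nat \<lceil>C\<rceil>)" using x(2) by linarith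
  obtain Y m where Y: "Im Y = 0" "C \<le> Re Y"
    "inverse_branch exp (cball ((exp ^^ (n + 4)) w) h) (cball Y 1) m"
    using inverse_branch_along_real_orbit[OF x h(1,2) J1 J2] by blast
  have to_v: "inverse_branch exp (cball Y 1) (cball v d) 3"
    using Y(2) unfolding C_def by (rule inverse_branch_from_far_real_point[OF Y(1) _ v d])
  have "inverse_branch exp (ball z0 r) (cball v d) (3 + (m + (n + 4)))"
    by (rule inverse_branch_trans[OF inverse_branch_trans[OF to_x Y(3)] to_v])
  then show ?thesis by (intro exI[of _ "3 + (m + (n + 4))"]) simp
qed

lemma dense_iff_meets_open:
  "closure S = UNIV \<longleftrightarrow> (\<forall>U. open U \<longrightarrow> U \<noteq> {} \<longrightarrow> S \<inter> U \<noteq> {})"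
proof
  assume "closure S = UNIV"
  then show "\<forall>U. open U \<longrightarrow> U \<noteq> {} \<longrightarrow> S \<inter> U \<noteq> {}"
    using open_Int_closure_eq_empty by (metis Int_UNIV_right inf_commute)
next
  assume "\<forall>U. open U \<longrightarrow> U \<noteq> {} \<longrightarrow> S \<inter> U \<noteq> {}"
  then have "x \<in> closure S" for x unfolding closure_iff_nhds_not_empty by blast
  then show "closure S = UNIV" by blast
qed

lemma open_contains_disc_away_from_zero:
  fixes U :: "complex set"
  assumes "open U" "U \<noteq> {}"
  obtains v d where "v \<noteq> 0" "0 < d" "d \<le> norm v / 3" "cball v d \<subseteq> U"
proof -
  obtain c \<rho> where "0 < \<rho>" "ball c \<rho> \<subseteq> U" using assms by (meson ex_in_conv open_contains_ball)
  define v\<^sub>1 v\<^sub>2 where "v\<^sub>1 = c + of_real (\<rho>/2)" and "v\<^sub>2 = c - of_real (\<rho>/2)"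
  have "\<rho> \<le> norm v\<^sub>1 + norm v\<^sub>2"
    using norm_triangle_ineq4[of v\<^sub>1 v\<^sub>2] \<open>0 < \<rho>\<close> by (simp add: v\<^sub>1_def v\<^sub>2_def)
  moreover have "dist c v\<^sub>1 = \<rho>/2" "dist c v\<^sub>2 = \<rho>/2"
    using \<open>0 < \<rho>\<close> by (simp_all add: v\<^sub>1_def v\<^sub>2_def dist_norm)
  ultimately obtain v where v: "\<rho>/2 \<le> norm v" "dist c v = \<rho>/2"
  proof (cases "\<rho>/2 \<le> norm v\<^sub>1")
    case False
    with \<open>\<rho> \<le> norm v\<^sub>1 + norm v\<^sub>2\<close> have "\<rho>/2 \<le> norm v\<^sub>2" by linarith
    then show ?thesis using that \<open>dist c v\<^sub>2 = \<rho>/2\<close> by blast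
  qed (use that in blast)
  show ?thesis
  proof
    show "v \<noteq> 0" "0 < \<rho>/6" "\<rho>/6 \<le> norm v / 3" using v \<open>0 < \<rho>\<close> by auto
    have "cball v (\<rho>/6) \<subseteq> ball c \<rho>"
      using v(2) \<open>0 < \<rho>\<close> by (simp add: cball_subset_ball_iff dist_commute)
    then show "cball v (\<rho>/6) \<subseteq> U" using \<open>ball c \<rho> \<subseteq> U\<close> by blast
  qed
qed

(* Birkhoff's transitivity theorem: for a topologically transitive continuous map of a
   Euclidean space, points with dense orbits are dense (Baire category theorem). *)
lemma transitive_map_has_dense_orbits:
  fixes f :: "'a::euclidean_space \<Rightarrow> 'a"
  assumes cont: "continuous_on UNIV f"
    and transitive: "\<And>U V. open U \<Longrightarrow> open V \<Longrightarrow> U \<noteq> {} \<Longrightarrow> V \<noteq> {} \<Longrightarrow> \<exists>z\<in>U. \<exists>n. (f ^^ n) z \<in> V"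
  shows "closure {z. closure {(f ^^ n) z | n. True} = UNIV} = UNIV"
proof -
  have cont_iterate: "continuous_on UNIV (f ^^ n)" for n
  proof (induction n)
    case (Suc n)
    then show ?case using continuous_on_compose[OF Suc continuous_on_subset[OF cont]] by simp
  qed (simp add: continuous_on_id)
  define hits where "hits V = {z. \<exists>n. (f ^^ n) z \<in> V}" for V
  have hits_open: "open (hits V)" if "open V" for V
  proof -
    have "hits V = (\<Union>n. (f ^^ n) -` V)" unfolding hits_def by auto
    then show ?thesis using open_vimage[OF that cont_iterate] by auto
  qed
  have hits_dense: "closure (hits V) = UNIV" if "open V" "V \<noteq> {}" for V
    unfolding dense_iff_meets_open hits_def using transitive[OF _ that(1) _ that(2)] by blast
  obtain \<B> :: "'a set set" where \<B>: "countable \<B>" "\<And>B. B \<in> \<B> \<Longrightarrow> open B"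
    "\<And>S. open S \<Longrightarrow> \<exists>\<U>. \<U> \<subseteq> \<B> \<and> S = \<Union>\<U>"
    using univ_second_countable by blast
  define G where "G = hits ` (\<B> - {{}})"
  have "UNIV \<subseteq> closure (\<Inter>G)"
  proof (rule Baire)
    show "countable G" unfolding G_def using \<B>(1) by simp
    show "openin (top_of_set UNIV) T \<and> UNIV \<subseteq> closure T" if "T \<in> G" for T
      using that hits_open hits_dense \<B>(2) unfolding G_def by auto
  qed simp
  moreover have "\<Inter>G \<subseteq> {z. closure {(f ^^ n) z | n. True} = UNIV}"
  proof
    fix z assume z: "z \<in> \<Inter>G"
    have "{(f ^^ n) z | n. True} \<inter> U \<noteq> {}" if "open U" "U \<noteq> {}" for U
    proof -
      obtain \<U> where "\<U> \<subseteq> \<B>" "U = \<Union>\<U>" using \<B>(3)[OF \<open>open U\<close>] by blast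
      then obtain V where "V \<in> \<B>" "V \<noteq> {}" "V \<subseteq> U" using \<open>U \<noteq> {}\<close> by auto
      then have "z \<in> hits V" using z unfolding G_def by auto
      then show ?thesis using \<open>V \<subseteq> U\<close> unfolding hits_def by blast
    qed
    then show "z \<in> {z. closure {(f ^^ n) z | n. True} = UNIV}" by (simp add: dense_iff_meets_open)
  qed
  ultimately show ?thesis using closure_mono by blast
qed

(* An inverse branch of f^m from a closed ball into itself has a fixed point (Brouwer),
   which is a periodic point of f. *)
lemma periodic_point_from_inverse_branch:
  fixes f :: "'a::euclidean_space \<Rightarrow> 'a"
  assumes "0 < d" "inverse_branch f (cball v d) (cball v d) m"
  shows "\<exists>p\<in>cball v d. \<forall>n. (f ^^ (n + m)) p = (f ^^ n) p"
proof -
  obtain g where g: "continuous_on (cball v d) g" "g ` cball v d \<subseteq> cball v d"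
    "\<forall>y\<in>cball v d. (f ^^ m) (g y) = y"
    using assms(2) unfolding inverse_branch_def by blast
  obtain p where p: "p \<in> cball v d" "g p = p"
    using brouwer_ball[OF assms(1) g(1)] g(2) by blast
  then have "(f ^^ m) p = p" using g(3) by metis
  then show ?thesis using p(1) by (intro bexI[of _ p]) (simp_all add: funpow_add)
qed

lemma exp_is_transitive:
  fixes U V :: "complex set"
  assumes "open U" "open V" "U \<noteq> {}" "V \<noteq> {}"
  shows "\<exists>z\<in>U. \<exists>n. (exp ^^ n) z \<in> V"
proof -
  obtain c r where "0 < r" "ball c r \<subseteq> U" using assms(1,3) by (meson ex_in_conv open_contains_ball)
  obtain v d where v: "v \<noteq> 0" "0 < d" "d \<le> norm v / 3" "cball v d \<subseteq> V"
    using open_contains_disc_away_from_zero[OF assms(2,4)] by blast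
  obtain m g where g: "g ` cball v d \<subseteq> ball c r" "\<forall>y\<in>cball v d. (exp ^^ m) (g y) = y"
    using exp_inverse_branch_onto_disc[OF \<open>0 < r\<close> v(1,3)] unfolding inverse_branch_def by blast
  have v_in: "v \<in> cball v d" using v(2) by simp
  have "g v \<in> U" using g(1) v_in \<open>ball c r \<subseteq> U\<close> by (meson image_subset_iff subsetD)
  moreover have "(exp ^^ m) (g v) \<in> V" using g(2) v_in v(4) by (metis subsetD)
  ultimately show ?thesis by blast
qed

lemma escaping_points_dense:
  "closure {z0 :: complex. filterlim (\<lambda>n. norm ((exp ^^ n) z0)) at_top sequentially} = UNIV"
  unfolding dense_iff_meets_open
proof (intro allI impI)
  fix U :: "complex set" assume "open U" "U \<noteq> {}"
  then obtain c r where "0 < r" "ball c r \<subseteq> U" by (meson ex_in_conv open_contains_ball)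
  moreover obtain w n where "w \<in> ball c r" "Im ((exp ^^ n) w) = 0"
    using exp_orbits_reach_real_axis[OF \<open>0 < r\<close>] by blast
  ultimately show "{z0. filterlim (\<lambda>n. norm ((exp ^^ n) z0)) at_top sequentially} \<inter> U \<noteq> {}"
    using reaching_real_axis_escapes by blast
qed

lemma periodic_points_dense:
  "closure {z0 :: complex. \<exists>k>0. \<forall>n. (exp ^^ (n + k)) z0 = (exp ^^ n) z0} = UNIV"
  unfolding dense_iff_meets_open
proof (intro allI impI)
  fix U :: "complex set" assume "open U" "U \<noteq> {}"
  then obtain v d where v: "v \<noteq> 0" "0 < d" "d \<le> norm v / 3" "cball v d \<subseteq> U"
    by (rule open_contains_disc_away_from_zero)
  obtain m where "0 < m" "inverse_branch exp (ball v d) (cball v d) m"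
    using exp_inverse_branch_onto_disc[OF v(2) v(1,3)] by blast
  then have "inverse_branch exp (cball v d) (cball v d) m"
    using inverse_branch_mono ball_subset_cball by blast
  then obtain p where "p \<in> cball v d" "\<forall>n. (exp ^^ (n + m)) p = (exp ^^ n) p"
    using periodic_point_from_inverse_branch[OF v(2)] by blast
  then show "{z0. \<exists>k>0. \<forall>n. (exp ^^ (n + k)) z0 = (exp ^^ n) z0} \<inter> U \<noteq> {}"
    using \<open>0 < m\<close> v(4) by blast
qed

lemma dense_orbit_points_dense:
  "closure {z0 :: complex. closure {(exp ^^ n) z0 | n. True} = UNIV} = UNIV"
  using transitive_map_has_dense_orbits[OF continuous_on_exp[OF continuous_on_id] exp_is_transitive]
  by simp

theorem mainTheorem1:
  shows "closure {z0 :: complex. filterlim (\<lambda>n. norm ((exp ^^ n) z0)) at_top sequentially} = UNIV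
       \<and> closure {z0 :: complex. closure {(exp ^^ n) z0 | n. True} = UNIV} = UNIV
       \<and> closure {z0 :: complex. \<exists>k>0. \<forall>n. (exp ^^ (n + k)) z0 = (exp ^^ n) z0} = UNIV"
  using escaping_points_dense dense_orbit_points_dense periodic_points_dense by blast

end
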